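(* Let $(S,\mathit{Act},P,\mu)$ be an MDP, $\pi$ a stationary policy, $I\subseteq S$ a measurable set that is absorbing under $\pi$ with $\mu(I)=1$, and $A,B\subseteq S$ measurable. Let $0<\gamma<1$ and suppose there is a constant $\bar H<\infty$ with $\mathbb{E}_\pi[\mathrm{step}^{(A,B)}\mid S_0=s]\le\bar H$ for all $s\in I$. Let the reward be $r(s,a,s')=r_B\mathbf 1_{\{s\in B\}}-r_{A\setminus B}\mathbf 1_{\{s\in A\setminus B\}}$ with $r_B,r_{A\setminus B}>0$ and $\frac{r_B}{r_{A\setminus B}}\ge\frac{1}{1-\gamma}\left(\frac{1}{\gamma^{\bar H+1}}-1\right)$, and the state-dependent discount $\Gamma(s)=\gamma$ if $s\in A\cup B$, $\Gamma(s)=1$ otherwise. Then for all $s\in I$, $$V^\pi(s)\ge -\,r_{A\setminus B}\,\frac{1-\gamma^{\bar H}}{1-\gamma}.$$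
   Context: State and action spaces are finite/countable or Borel subsets of Euclidean space; $P$ is a stochastic kernel on $S$ given $S\times\mathit{Act}$ and $\mu$ an initial distribution. A stationary policy $\pi$ is a stochastic kernel on $\mathit{Act}$ given $S$; $\Pr_\pi(\cdot\mid S_0=s)$, $\mathbb{E}_\pi[\cdot\mid S_0=s]$ refer to the process with $S_0=s$, $A_t\sim\pi(\cdot\mid S_t)$, $S_{t+1}\sim P(\cdot\mid S_t,A_t)$. A measurable set $X$ is absorbing under $\pi$ if $\Pr_\pi(S_1\in X\mid S_0=s)=1$ for all $s\in X$. For a run $\rho=(s_0,s_1,\dots)$: $\mathrm{step}^{(A,B)}(\rho):=|\{i:0\le i<\min\{j\ge0:s_j\in B\},\ s_i\in A\}|$ (with $\min\emptyset=\infty$), and $N^U_t(\rho):=|\{i:0\le i<t,\ s_i\in U\}|$. The value function with the state-dependent discount $\Gamma$ is $V^\pi(s)=\mathbb{E}_\pi\big[\sum_{t\ge0}\gamma^{N_t^{A\cup B}}r(S_t,A_t,S_{t+1})\mid S_0=s\big]$. *)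

theory Defs
  imports "HOL-Probability.Probability"
begin

text \<open>The family Pr of path
measures (Pr s = law of the process started in S_0 = s under the stationary
policy pi) is characterised by the one-step unfolding equation below, which
determines it uniquely (Ionescu-Tulcea).\<close>

definition is_path_kernel ::
  "'s measure \<Rightarrow> 'a measure \<Rightarrow> ('s \<times> 'a \<Rightarrow> 's measure) \<Rightarrow> ('s \<Rightarrow> 'a measure)
   \<Rightarrow> ('s \<Rightarrow> ('s \<times> 'a) stream measure) \<Rightarrow> bool" where
  "is_path_kernel M Ma P pol Pr \<longleftrightarrow>
     Pr \<in> M \<rightarrow>\<^sub>M prob_algebra (stream_space (M \<Otimes>\<^sub>M Ma)) \<and>
     (\<forall>s\<in>space M. Pr s =
        pol s \<bind> (\<lambda>a. P (s, a) \<bind>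
          (\<lambda>s'. distr (Pr s') (stream_space (M \<Otimes>\<^sub>M Ma)) (\<lambda>\<omega>. (s, a) ## \<omega>))))"

definition absorbing ::
  "('s \<Rightarrow> ('s \<times> 'a) stream measure) \<Rightarrow> 's set \<Rightarrow> bool" where
  "absorbing Pr X \<longleftrightarrow> (\<forall>s\<in>X. prob_space.prob (Pr s) {\<omega>\<in>space (Pr s). fst (\<omega> !! 1) \<in> X} = 1)"

text \<open>step^(A,B)(rho): number of indices i before the first hitting time of B with s_i \<in> A
(i < min{j. s_j \<in> B} iff no s_j with j \<le> i lies in B); value \<infinity> if infinitely many.\<close>
definition step_AB :: "'s set \<Rightarrow> 's set \<Rightarrow> 's stream \<Rightarrow> ennreal" where
  "step_AB A B \<rho> =
     (let X = {i. (\<forall>j\<le>i. \<rho> !! j \<notin> B) \<and> \<rho> !! i \<in> A}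
      in if finite X then ennreal (real (card X)) else \<infinity>)"

definition N_count :: "'s set \<Rightarrow> nat \<Rightarrow> 's stream \<Rightarrow> nat" where
  "N_count U t \<rho> = card {i. i < t \<and> \<rho> !! i \<in> U}"

definition reward :: "real \<Rightarrow> real \<Rightarrow> 's set \<Rightarrow> 's set \<Rightarrow> 's \<Rightarrow> 'a \<Rightarrow> 's \<Rightarrow> real" where
  "reward rB rAB A B s a s' = rB * indicator B s - rAB * indicator (A - B) s"

definition value_fun ::
  "('s \<Rightarrow> ('s \<times> 'a) stream measure) \<Rightarrow> real \<Rightarrow> ('s \<Rightarrow> 'a \<Rightarrow> 's \<Rightarrow> real)
   \<Rightarrow> 's set \<Rightarrow> 's set \<Rightarrow> 's \<Rightarrow> real" where
  "value_fun Pr \<gamma> r A B s =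
     integral\<^sup>L (Pr s) (\<lambda>\<omega>. \<Sum>t. \<gamma> ^ N_count (A \<union> B) t (smap fst \<omega>) *
        r (fst (\<omega> !! t)) (snd (\<omega> !! t)) (fst (\<omega> !! Suc t)))"

end

theory Submission
  imports Defs
begin

text \<open>
  Let h(s) be the expected number of visits to A before B from s, and let
  c(x) = r_AB (1 - \<gamma>^x) / (1 - \<gamma>), which for natural x is the discounted cost
  r_AB (1 + \<gamma> + ... + \<gamma>^(x-1)) of x penalised steps. By induction on the horizon n,
  the expected n-step return from s \<in> I is at least -c(h(s)); the next state stays in I.
  Outside A \<union> B nothing is paid or discounted and h(s) = E h(S_1); on A - B one pays r_AB
  and discounts once, matching c(1 + x) = r_AB + \<gamma> c(x) and h(s) = 1 + E h(S_1); on B the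
  reward r_B dominates \<gamma> c(H), and this is all the ratio hypothesis is used for.
  Concavity of c (Jensen) gives E c(h(S_1)) \<le> c(E h(S_1)) in each case. Dominated
  convergence in n and monotonicity of c together with h \<le> H give the bound.
\<close>

section \<open>Discounted returns along a path\<close>

lemma N_count_0 [simp]: "N_count U 0 \<rho> = 0"
  by (simp add: N_count_def)

lemma N_count_Suc: "N_count U (Suc t) \<rho> = N_count U t \<rho> + (if \<rho> !! t \<in> U then 1 else 0)"
proof -
  have "{i. i < Suc t \<and> \<rho> !! i \<in> U} = {i. i < t \<and> \<rho> !! i \<in> U} \<union> (if \<rho> !! t \<in> U then {t} else {})"
    by (auto simp: less_Suc_eq)
  then show ?thesis
    by (simp add: N_count_def)
qed

lemma N_count_Suc_Cons: "N_count U (Suc t) (x ## \<rho>) = (if x \<in> U then 1 else 0) + N_count U t \<rho>"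
  by (induction t) (simp_all add: N_count_Suc)

lemma sum_discounted_indicator:
  fixes \<gamma> :: real
  assumes "\<gamma> \<noteq> 1"
  shows "(\<Sum>t<n. \<gamma> ^ N_count U t \<rho> * indicator U (\<rho> !! t)) = (1 - \<gamma> ^ N_count U n \<rho>) / (1 - \<gamma>)"
  using assms by (induction n) (auto simp: N_count_Suc field_simps)

definition partial_return :: "real \<Rightarrow> 's set \<Rightarrow> ('s \<Rightarrow> real) \<Rightarrow> nat \<Rightarrow> 's stream \<Rightarrow> real" where
  "partial_return \<gamma> U r n \<rho> = (\<Sum>t<n. \<gamma> ^ N_count U t \<rho> * r (\<rho> !! t))"

definition discounted_return :: "real \<Rightarrow> 's set \<Rightarrow> ('s \<Rightarrow> real) \<Rightarrow> 's stream \<Rightarrow> real" where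
  "discounted_return \<gamma> U r \<rho> = (\<Sum>t. \<gamma> ^ N_count U t \<rho> * r (\<rho> !! t))"

lemma partial_return_0 [simp]: "partial_return \<gamma> U r 0 \<rho> = 0"
  by (simp add: partial_return_def)

lemma partial_return_Suc_Cons:
  "partial_return \<gamma> U r (Suc n) (x ## \<rho>) = r x + (if x \<in> U then \<gamma> else 1) * partial_return \<gamma> U r n \<rho>"
  unfolding partial_return_def
  by (subst sum.lessThan_Suc_shift) (simp add: N_count_Suc_Cons sum_distrib_left mult.assoc)

context
  fixes \<gamma> R :: real and U :: "'s set" and r :: "'s \<Rightarrow> real"
  assumes gamma: "0 \<le> \<gamma>" "\<gamma> < 1"
    and R: "0 \<le> R" and r_le: "\<And>x. \<bar>r x\<bar> \<le> R * indicator U x"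
begin

lemma abs_discounted_term_le:
  "\<bar>\<gamma> ^ N_count U t \<rho> * r (\<rho> !! t)\<bar> \<le> R * (\<gamma> ^ N_count U t \<rho> * indicator U (\<rho> !! t))"
  using mult_left_mono[OF r_le[of "\<rho> !! t"], of "\<gamma> ^ N_count U t \<rho>"] gamma
  by (simp add: abs_mult mult_ac)

lemma sum_discounted_indicator_le: "(\<Sum>t<n. \<gamma> ^ N_count U t \<rho> * indicator U (\<rho> !! t)) \<le> 1 / (1 - \<gamma>)"
  using gamma by (subst sum_discounted_indicator) (auto intro: divide_right_mono)

lemma abs_partial_return_le: "\<bar>partial_return \<gamma> U r n \<rho>\<bar> \<le> R / (1 - \<gamma>)"
proof -
  have "\<bar>partial_return \<gamma> U r n \<rho>\<bar> \<le> (\<Sum>t<n. R * (\<gamma> ^ N_count U t \<rho> * indicator U (\<rho> !! t)))"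
    unfolding partial_return_def by (rule order_trans[OF sum_abs sum_mono[OF abs_discounted_term_le]])
  also have "\<dots> \<le> R * (1 / (1 - \<gamma>))"
    unfolding sum_distrib_left[symmetric] using R
    by (rule mult_left_mono[OF sum_discounted_indicator_le])
  finally show ?thesis by simp
qed

lemma partial_return_tendsto:
  "(\<lambda>n. partial_return \<gamma> U r n \<rho>) \<longlonglongrightarrow> discounted_return \<gamma> U r \<rho>"
proof -
  have "summable (\<lambda>t. \<gamma> ^ N_count U t \<rho> * indicator U (\<rho> !! t))"
    using gamma sum_discounted_indicator_le by (intro summableI_nonneg_bounded) auto
  then have "summable (\<lambda>t. \<gamma> ^ N_count U t \<rho> * r (\<rho> !! t))"
    by (rule summable_comparison_test'[OF summable_mult, where N=0]) (use abs_discounted_term_le in auto)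
  then show ?thesis
    unfolding partial_return_def discounted_return_def by (rule summable_LIMSEQ)
qed

end

lemma measurable_partial_return [measurable]:
  assumes [measurable]: "U \<in> sets M" "r \<in> borel_measurable M"
  shows "partial_return \<gamma> U r n \<in> borel_measurable (stream_space M)"
  unfolding partial_return_def N_count_def by measurable

lemma measurable_discounted_return:
  assumes "0 \<le> \<gamma>" "\<gamma> < 1" "0 \<le> R" "\<And>x. \<bar>r x\<bar> \<le> R * indicator U x"
    and [measurable]: "U \<in> sets M" "r \<in> borel_measurable M"
  shows "discounted_return \<gamma> U r \<in> borel_measurable (stream_space M)"
  by (rule borel_measurable_LIMSEQ_real[OF partial_return_tendsto[OF assms(1-4)]]) measurable

lemma step_AB_Cons:
  "step_AB A B (x ## \<rho>) = (if x \<in> B then 0 else indicator A x + step_AB A B \<rho>)"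
proof -
  define X where "X \<rho> = {i. (\<forall>j\<le>i. \<rho> !! j \<notin> B) \<and> \<rho> !! i \<in> A}" for \<rho>
  have step: "step_AB A B \<rho> = (if finite (X \<rho>) then ennreal (card (X \<rho>)) else \<infinity>)" for \<rho>
    by (simp add: step_AB_def X_def)
  show ?thesis
  proof (cases "x \<in> B")
    case True
    then have "X (x ## \<rho>) = {}"
      by (auto simp: X_def)
    with True show ?thesis
      by (simp add: step)
  next
    case False
    have prefix_Cons: "(\<forall>j\<le>Suc i. (x ## \<rho>) !! j \<notin> B) \<longleftrightarrow> (\<forall>j\<le>i. \<rho> !! j \<notin> B)" for i
      using False by (simp only: less_Suc_eq_le[symmetric] All_less_Suc2) simp
    have X_Cons: "X (x ## \<rho>) = (if x \<in> A then {0} else {}) \<union> Suc ` X \<rho>"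
    proof (rule set_eqI)
      fix i
      show "i \<in> X (x ## \<rho>) \<longleftrightarrow> i \<in> (if x \<in> A then {0} else {}) \<union> Suc ` X \<rho>"
        using False by (cases i) (auto simp: X_def prefix_Cons)
    qed
    show ?thesis
      using False by (simp add: step X_Cons finite_image_iff card_image ennreal_plus)
  qed
qed

lemma measurable_step_AB [measurable]:
  assumes [measurable]: "A \<in> sets M" "B \<in> sets M"
  shows "step_AB A B \<in> borel_measurable (stream_space M)"
proof -
  define X where "X \<rho> = {i. (\<forall>j\<le>i. \<rho> !! j \<notin> B) \<and> \<rho> !! i \<in> A}" for \<rho>
  have step: "step_AB A B = (\<lambda>\<rho>. \<Sum>i. indicator (X \<rho>) i)"
    by (simp add: fun_eq_iff nn_integral_count_space_nat[symmetric] emeasure_count_space step_AB_def X_def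
        ennreal_of_nat_eq_real_of_nat)
  show ?thesis
    unfolding step
  proof (rule borel_measurable_suminf_order)
    fix i
    have "(\<lambda>\<rho>. indicator (X \<rho>) i :: ennreal) = (\<lambda>\<rho>. if (\<forall>j\<in>{..i}. \<rho> !! j \<notin> B) \<and> \<rho> !! i \<in> A then 1 else 0)"
      by (auto simp: X_def fun_eq_iff indicator_def)
    also have "\<dots> \<in> borel_measurable (stream_space M)"
      by measurable
    finally show "(\<lambda>\<rho>. indicator (X \<rho>) i :: ennreal) \<in> borel_measurable (stream_space M)" .
  qed
qed

section \<open>The discounted cost of penalised steps\<close>

definition discounted_cost :: "real \<Rightarrow> real \<Rightarrow> real \<Rightarrow> real" where
  "discounted_cost \<gamma> c x = c * (1 - \<gamma> powr x) / (1 - \<gamma>)"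

lemma borel_measurable_discounted_cost [measurable]: "discounted_cost \<gamma> c \<in> borel_measurable borel"
  unfolding discounted_cost_def by measurable

context
  fixes \<gamma> c :: real
  assumes gamma: "0 < \<gamma>" "\<gamma> < 1"
begin

lemma discounted_cost_0 [simp]: "discounted_cost \<gamma> c 0 = 0"
  using gamma by (simp add: discounted_cost_def)

lemma discounted_cost_1_plus: "discounted_cost \<gamma> c (1 + x) = c + \<gamma> * discounted_cost \<gamma> c x"
  using gamma by (simp add: discounted_cost_def powr_add field_simps)

lemma discounted_cost_mono: "0 \<le> c \<Longrightarrow> x \<le> y \<Longrightarrow> discounted_cost \<gamma> c x \<le> discounted_cost \<gamma> c y"
  using gamma unfolding discounted_cost_def
  by (intro divide_right_mono mult_left_mono) (auto intro: powr_mono')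

lemma discounted_cost_bounds:
  assumes "0 \<le> c" "0 \<le> x"
  shows "0 \<le> discounted_cost \<gamma> c x" "discounted_cost \<gamma> c x \<le> c / (1 - \<gamma>)"
  using gamma assms unfolding discounted_cost_def
  by (auto intro!: divide_right_mono divide_nonneg_pos mult_nonneg_nonneg mult_left_le powr_le1)

lemma concave_discounted_cost:
  assumes "0 \<le> c"
  shows "concave_on UNIV (discounted_cost \<gamma> c)"
proof -
  have "convex_on UNIV (\<lambda>x. \<gamma> powr x)"
  proof (rule convex_on_realI[where f'="\<lambda>x. ln \<gamma> * \<gamma> powr x"])
    show "((\<lambda>x. \<gamma> powr x) has_real_derivative ln \<gamma> * \<gamma> powr x) (at x)" for x
      using gamma by (auto intro!: derivative_eq_intros)
    show "ln \<gamma> * \<gamma> powr x \<le> ln \<gamma> * \<gamma> powr y" if "x \<le> y" for x y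
      using gamma that by (intro mult_left_mono_neg powr_mono') auto
  qed simp
  then have "convex_on UNIV (\<lambda>x. c / (1 - \<gamma>) * \<gamma> powr x + - c / (1 - \<gamma>))"
    using gamma assms by (intro convex_on_add convex_on_cmul) (auto simp: convex_on_const)
  then show ?thesis
    by (simp add: concave_on_def discounted_cost_def diff_divide_distrib right_diff_distrib)
qed

end

lemma discounted_cost_le_of_ratio:
  fixes \<gamma> H c r :: real
  assumes gamma: "0 < \<gamma>" "\<gamma> < 1" and "0 \<le> H" "0 < c"
    and ratio: "r / c \<ge> 1 / (1 - \<gamma>) * (1 / \<gamma> powr (H + 1) - 1)"
  shows "\<gamma> * discounted_cost \<gamma> c H \<le> r"
proof -
  define p where "p = \<gamma> powr (H + 1)"
  have p: "0 < p" "p \<le> 1"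
    using gamma \<open>0 \<le> H\<close> by (auto simp: p_def powr_le1)
  have "\<gamma> - p \<le> 1 / p - 1"
  proof -
    have "\<gamma> - p \<le> 1 - p" using gamma by simp
    also have "\<dots> \<le> (1 - p) / p" using p by (simp add: le_divide_eq mult_left_le)
    finally show ?thesis using p by (simp add: diff_divide_distrib)
  qed
  then have "c * (\<gamma> - p) / (1 - \<gamma>) \<le> c * (1 / p - 1) / (1 - \<gamma>)"
    using gamma \<open>0 < c\<close> by (intro divide_right_mono mult_left_mono) auto
  also have "\<dots> \<le> r"
    using ratio gamma \<open>0 < c\<close> by (simp add: p_def le_divide_eq field_simps)
  finally show ?thesis
    using gamma by (simp add: discounted_cost_def p_def powr_add right_diff_distrib mult_ac)
qed

lemma (in prob_space) expectation_discounted_cost_le: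
  assumes gamma: "0 < \<gamma>" "\<gamma> < 1" and "0 \<le> c"
    and X: "integrable M X" "AE x in M. 0 \<le> X x"
  shows "expectation (\<lambda>x. discounted_cost \<gamma> c (X x)) \<le> discounted_cost \<gamma> c (expectation X)"
proof -
  have "integrable M (\<lambda>x. - discounted_cost \<gamma> c (X x))"
  proof (rule integrable_const_bound[where B="c / (1 - \<gamma>)"])
    show "AE x in M. norm (- discounted_cost \<gamma> c (X x)) \<le> c / (1 - \<gamma>)"
      using X(2) by eventually_elim (use discounted_cost_bounds[OF gamma \<open>0 \<le> c\<close>] in auto)
    show "(\<lambda>x. - discounted_cost \<gamma> c (X x)) \<in> borel_measurable M"
      using X(1) by (simp add: discounted_cost_def)
  qed
  from jensens_inequality[OF X(1) _ _ this concave_discounted_cost[OF gamma \<open>0 \<le> c\<close>, unfolded concave_on_def]]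
  show ?thesis
    by simp
qed

section \<open>Markov chains given by the law of their paths\<close>

lemma (in prob_space) abs_integral_le_const:
  fixes f :: "_ \<Rightarrow> real"
  assumes "f \<in> borel_measurable M" "AE x in M. \<bar>f x\<bar> \<le> C"
  shows "\<bar>\<integral>x. f x \<partial>M\<bar> \<le> C"
proof -
  have "integrable M f"
    using assms by (intro integrable_const_bound[where B=C]) auto
  then have "(\<integral>x. \<bar>f x\<bar> \<partial>M) \<le> C"
    using assms(2) by (intro integral_le_const) auto
  then show ?thesis
    using integral_abs_bound[of M f] by linarith
qed

locale markov_chain_law =
  fixes M :: "'s measure" and K :: "'s \<Rightarrow> 's measure" and L :: "'s \<Rightarrow> 's stream measure"
  assumes K_kernel: "K \<in> M \<rightarrow>\<^sub>M prob_algebra M"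
    and L_kernel: "L \<in> M \<rightarrow>\<^sub>M prob_algebra (stream_space M)"
    and L_unfold: "s \<in> space M \<Longrightarrow> L s = K s \<bind> (\<lambda>s'. distr (L s') (stream_space M) ((##) s))"
begin

lemma prob_space_K: "s \<in> space M \<Longrightarrow> prob_space (K s)"
  using measurable_space[OF K_kernel] by (simp add: space_prob_algebra)

lemma prob_space_L: "s \<in> space M \<Longrightarrow> prob_space (L s)"
  using measurable_space[OF L_kernel] by (simp add: space_prob_algebra)

lemma sets_K [measurable_cong]: "s \<in> space M \<Longrightarrow> sets (K s) = sets M"
  by (rule sets_kernel[OF measurable_prob_algebraD[OF K_kernel]])

lemma sets_L [measurable_cong]: "s \<in> space M \<Longrightarrow> sets (L s) = sets (stream_space M)"
  by (rule sets_kernel[OF measurable_prob_algebraD[OF L_kernel]])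

lemma space_K: "s \<in> space M \<Longrightarrow> space (K s) = space M"
  using sets_K by (rule sets_eq_imp_space_eq)

lemma space_L: "s \<in> space M \<Longrightarrow> space (L s) = space (stream_space M)"
  using sets_L by (rule sets_eq_imp_space_eq)

lemma measurable_K_iff: "s \<in> space M \<Longrightarrow> K s \<rightarrow>\<^sub>M N = M \<rightarrow>\<^sub>M N"
  by (rule subprob_measurableD(3)[OF measurable_prob_algebraD[OF K_kernel]])

lemma measurable_L_iff: "s \<in> space M \<Longrightarrow> L s \<rightarrow>\<^sub>M N = stream_space M \<rightarrow>\<^sub>M N"
  by (rule subprob_measurableD(3)[OF measurable_prob_algebraD[OF L_kernel]])

lemma measurable_nn_integral_L [measurable]:
  "f \<in> borel_measurable (stream_space M) \<Longrightarrow> (\<lambda>s. \<integral>\<^sup>+\<rho>. f \<rho> \<partial>L s) \<in> borel_measurable M"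
  by (rule measurable_compose[OF measurable_prob_algebraD[OF L_kernel] nn_integral_measurable_subprob_algebra])

lemma measurable_integral_L [measurable]:
  "f \<in> borel_measurable (stream_space M) \<Longrightarrow> (\<lambda>s. \<integral>\<rho>. f \<rho> \<partial>L s) \<in> borel_measurable M"
  for f :: "'s stream \<Rightarrow> real"
  by (rule measurable_compose[OF measurable_prob_algebraD[OF L_kernel] integral_measurable_subprob_algebra])

lemma integrable_L_bounded:
  fixes f :: "'s stream \<Rightarrow> real"
  assumes "s \<in> space M" "f \<in> borel_measurable (stream_space M)" "\<And>\<rho>. \<bar>f \<rho>\<bar> \<le> C"
  shows "integrable (L s) f"
  using assms prob_space_L[OF assms(1)]
  by (intro finite_measure.integrable_const_bound[where B=C] AE_I2)
    (auto simp: measurable_L_iff prob_space.finite_measure)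

lemma integrable_K_bounded:
  fixes f :: "'s \<Rightarrow> real"
  assumes "s \<in> space M" "f \<in> borel_measurable M" "AE s' in K s. \<bar>f s'\<bar> \<le> C"
  shows "integrable (K s) f"
  using assms prob_space_K[OF assms(1)]
  by (intro finite_measure.integrable_const_bound[where B=C])
    (auto simp: measurable_K_iff prob_space.finite_measure)

lemma distr_Cons_kernel:
  "s \<in> space M \<Longrightarrow> (\<lambda>s'. distr (L s') (stream_space M) ((##) s)) \<in> M \<rightarrow>\<^sub>M subprob_algebra (stream_space M)"
  by (rule measurable_prob_algebraD) (measurable, rule L_kernel, measurable)

lemma nn_integral_L_unfold:
  assumes s: "s \<in> space M" and [measurable]: "f \<in> borel_measurable (stream_space M)"
  shows "(\<integral>\<^sup>+\<rho>. f \<rho> \<partial>L s) = (\<integral>\<^sup>+s'. \<integral>\<^sup>+\<rho>. f (s ## \<rho>) \<partial>L s' \<partial>K s)"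
proof -
  have "(\<integral>\<^sup>+\<rho>. f \<rho> \<partial>L s) = (\<integral>\<^sup>+s'. \<integral>\<^sup>+\<rho>. f \<rho> \<partial>distr (L s') (stream_space M) ((##) s) \<partial>K s)"
    unfolding L_unfold[OF s]
    using distr_Cons_kernel[OF s] by (intro nn_integral_bind) (simp_all add: measurable_K_iff[OF s])
  also have "\<dots> = (\<integral>\<^sup>+s'. \<integral>\<^sup>+\<rho>. f (s ## \<rho>) \<partial>L s' \<partial>K s)"
    using s by (intro nn_integral_cong) (simp add: space_K nn_integral_distr)
  finally show ?thesis .
qed

lemma integral_L_unfold:
  fixes f :: "'s stream \<Rightarrow> real"
  assumes s: "s \<in> space M" and [measurable]: "f \<in> borel_measurable (stream_space M)"
    and f_bounded: "\<And>\<rho>. \<bar>f \<rho>\<bar> \<le> C"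
  shows "(\<integral>\<rho>. f \<rho> \<partial>L s) = (\<integral>s'. \<integral>\<rho>. f (s ## \<rho>) \<partial>L s' \<partial>K s)"
proof -
  interpret K: prob_space "K s"
    using s by (rule prob_space_K)
  let ?N = "\<lambda>s'. distr (L s') (stream_space M) ((##) s)"
  have N_le_1: "AE s' in K s. emeasure (?N s') (space (?N s')) \<le> ennreal 1"
    using measurable_space[OF distr_Cons_kernel[OF s]] unfolding space_subprob_algebra
    by (intro AE_I2) (simp add: space_K[OF s] subprob_space.emeasure_space_le_1 del: space_distr)
  have "(\<integral>\<rho>. f \<rho> \<partial>L s) = (\<integral>s'. \<integral>\<rho>. f \<rho> \<partial>?N s' \<partial>K s)"
    unfolding L_unfold[OF s] using distr_Cons_kernel[OF s] f_bounded
    by (intro integral_bind[OF _ _ _ K.finite_measure_axioms N_le_1]) (auto simp: measurable_K_iff[OF s])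
  also have "\<dots> = (\<integral>s'. \<integral>\<rho>. f (s ## \<rho>) \<partial>L s' \<partial>K s)"
    using s by (intro Bochner_Integration.integral_cong[OF refl]) (simp add: space_K integral_distr)
  finally show ?thesis .
qed

lemma nn_integral_L_shd:
  assumes s: "s \<in> space M" and [measurable]: "g \<in> borel_measurable M"
  shows "(\<integral>\<^sup>+\<rho>. g (shd \<rho>) \<partial>L s) = g s"
proof -
  have "(\<integral>\<^sup>+\<rho>. g (shd \<rho>) \<partial>L s) = (\<integral>\<^sup>+s'. \<integral>\<^sup>+\<rho>. g s \<partial>L s' \<partial>K s)"
    using s by (simp add: nn_integral_L_unfold)
  also have "\<dots> = (\<integral>\<^sup>+s'. g s \<partial>K s)"
    using s by (intro nn_integral_cong) (simp add: space_K prob_space.emeasure_space_1 prob_space_L)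
  also have "\<dots> = g s"
    using s by (simp add: prob_space.emeasure_space_1 prob_space_K)
  finally show ?thesis .
qed

lemma emeasure_L_snth_1:
  assumes s: "s \<in> space M" and [measurable]: "X \<in> sets M"
  shows "emeasure (L s) {\<rho> \<in> space (L s). \<rho> !! 1 \<in> X} = emeasure (K s) X"
proof -
  have "{\<rho> \<in> space (stream_space M). \<rho> !! 1 \<in> X} \<in> sets (stream_space M)"
    by measurable
  then have "emeasure (L s) {\<rho> \<in> space (L s). \<rho> !! 1 \<in> X} = (\<integral>\<^sup>+\<rho>. indicator X (\<rho> !! 1) \<partial>L s)"
    using s by (auto simp: space_L sets_L simp flip: nn_integral_indicator intro!: nn_integral_cong split: split_indicator)
  also have "\<dots> = (\<integral>\<^sup>+s'. \<integral>\<^sup>+\<rho>. indicator X (shd \<rho>) \<partial>L s' \<partial>K s)"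
    using s by (simp add: nn_integral_L_unfold)
  also have "\<dots> = (\<integral>\<^sup>+s'. indicator X s' \<partial>K s)"
    using s by (intro nn_integral_cong) (simp add: space_K nn_integral_L_shd)
  also have "\<dots> = emeasure (K s) X"
    using s by (simp add: sets_K)
  finally show ?thesis .
qed

context
  fixes \<gamma> R :: real and U :: "'s set" and r :: "'s \<Rightarrow> real"
  assumes gamma: "0 \<le> \<gamma>" "\<gamma> < 1"
    and R: "0 \<le> R" and r_le: "\<And>x. \<bar>r x\<bar> \<le> R * indicator U x"
    and U_sets [measurable]: "U \<in> sets M" and r_measurable [measurable]: "r \<in> borel_measurable M"
begin

lemma abs_integral_partial_return_le:
  "s \<in> space M \<Longrightarrow> \<bar>\<integral>\<rho>. partial_return \<gamma> U r n \<rho> \<partial>L s\<bar> \<le> R / (1 - \<gamma>)"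
  using abs_partial_return_le[OF gamma R r_le]
  by (intro prob_space.abs_integral_le_const prob_space_L) (auto simp: measurable_L_iff)

lemma integral_partial_return_Suc:
  assumes s: "s \<in> space M"
  shows "(\<integral>\<rho>. partial_return \<gamma> U r (Suc n) \<rho> \<partial>L s) =
    r s + (if s \<in> U then \<gamma> else 1) * (\<integral>s'. \<integral>\<rho>. partial_return \<gamma> U r n \<rho> \<partial>L s' \<partial>K s)"
proof -
  define g where "g = (if s \<in> U then \<gamma> else 1)"
  note bounded = abs_partial_return_le[OF gamma R r_le]
  have integral_affine:
    "(\<integral>\<rho>. r s + g * partial_return \<gamma> U r n \<rho> \<partial>L s') = r s + g * (\<integral>\<rho>. partial_return \<gamma> U r n \<rho> \<partial>L s')"
    if "s' \<in> space M" for s'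
  proof -
    interpret prob_space "L s'"
      using that by (rule prob_space_L)
    have "integrable (L s') (partial_return \<gamma> U r n)"
      by (rule integrable_L_bounded[OF that _ bounded]) measurable
    then show ?thesis
      by (simp add: prob_space)
  qed
  have "(\<integral>\<rho>. partial_return \<gamma> U r (Suc n) \<rho> \<partial>L s) =
      (\<integral>s'. \<integral>\<rho>. partial_return \<gamma> U r (Suc n) (s ## \<rho>) \<partial>L s' \<partial>K s)"
    by (rule integral_L_unfold[OF s _ bounded]) measurable
  also have "\<dots> = (\<integral>s'. r s + g * (\<integral>\<rho>. partial_return \<gamma> U r n \<rho> \<partial>L s') \<partial>K s)"
    using s by (intro Bochner_Integration.integral_cong[OF refl])
      (simp add: partial_return_Suc_Cons g_def[symmetric] space_K integral_affine)
  also have "\<dots> = r s + g * (\<integral>s'. \<integral>\<rho>. partial_return \<gamma> U r n \<rho> \<partial>L s' \<partial>K s)"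
  proof -
    interpret prob_space "K s"
      using s by (rule prob_space_K)
    have "integrable (K s) (\<lambda>s'. \<integral>\<rho>. partial_return \<gamma> U r n \<rho> \<partial>L s')"
      using s abs_integral_partial_return_le by (intro integrable_K_bounded AE_I2) (auto simp: space_K)
    then show ?thesis
      by (simp add: prob_space)
  qed
  finally show ?thesis
    by (simp add: g_def)
qed

lemma integral_partial_return_tendsto:
  assumes s: "s \<in> space M"
  shows "(\<lambda>n. \<integral>\<rho>. partial_return \<gamma> U r n \<rho> \<partial>L s) \<longlonglongrightarrow> (\<integral>\<rho>. discounted_return \<gamma> U r \<rho> \<partial>L s)"
proof (rule integral_dominated_convergence[where w="\<lambda>_. R / (1 - \<gamma>)"])
  show "integrable (L s) (\<lambda>_. R / (1 - \<gamma>))"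
    using s by (simp add: prob_space_L prob_space.finite_measure finite_measure.integrable_const)
  show "AE \<rho> in L s. (\<lambda>n. partial_return \<gamma> U r n \<rho>) \<longlonglongrightarrow> discounted_return \<gamma> U r \<rho>"
    using partial_return_tendsto[OF gamma R r_le] by simp
  show "AE \<rho> in L s. norm (partial_return \<gamma> U r n \<rho>) \<le> R / (1 - \<gamma>)" for n
    using abs_partial_return_le[OF gamma R r_le] by simp
  show "discounted_return \<gamma> U r \<in> borel_measurable (L s)"
    using measurable_discounted_return[OF gamma R r_le U_sets r_measurable] s by (simp add: measurable_L_iff)
qed (use s in \<open>simp add: measurable_L_iff\<close>)

end

end

section \<open>The reach-avoid bound for a Markov chain\<close>

definition reach_avoid_reward :: "real \<Rightarrow> real \<Rightarrow> 's set \<Rightarrow> 's set \<Rightarrow> 's \<Rightarrow> real" where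
  "reach_avoid_reward rB rAB A B s = rB * indicator B s - rAB * indicator (A - B) s"

lemma abs_reach_avoid_reward_le:
  "0 \<le> rB \<Longrightarrow> 0 \<le> rAB \<Longrightarrow> \<bar>reach_avoid_reward rB rAB A B s\<bar> \<le> (rB + rAB) * indicator (A \<union> B) s"
  by (auto simp: reach_avoid_reward_def indicator_def)

lemma measurable_reach_avoid_reward [measurable]:
  assumes [measurable]: "A \<in> sets M" "B \<in> sets M"
  shows "reach_avoid_reward rB rAB A B \<in> borel_measurable M"
  unfolding reach_avoid_reward_def by measurable

locale reach_avoid_chain = markov_chain_law +
  fixes I A B :: "'s set" and \<gamma> H :: real
  assumes I_sets [measurable]: "I \<in> sets M" and A_sets [measurable]: "A \<in> sets M"
    and B_sets [measurable]: "B \<in> sets M"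
    and I_closed: "\<And>s. s \<in> I \<Longrightarrow> AE s' in K s. s' \<in> I"
    and gamma: "0 < \<gamma>" "\<gamma> < 1" and H_nonneg: "0 \<le> H"
    and nn_integral_step_AB_le: "\<And>s. s \<in> I \<Longrightarrow> (\<integral>\<^sup>+\<rho>. step_AB A B \<rho> \<partial>L s) \<le> ennreal H"
begin

text \<open>Only meaningful on I, where the expectation is finite (\<open>enn2real \<infinity> = 0\<close>).\<close>

definition expected_steps :: "'s \<Rightarrow> real" where
  "expected_steps s = enn2real (\<integral>\<^sup>+\<rho>. step_AB A B \<rho> \<partial>L s)"

lemma measurable_expected_steps [measurable]: "expected_steps \<in> borel_measurable M"
  unfolding expected_steps_def by measurable

lemma expected_steps_nonneg: "0 \<le> expected_steps s"
  by (simp add: expected_steps_def)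

lemma I_into_space: "s \<in> I \<Longrightarrow> s \<in> space M"
  using sets.sets_into_space[OF I_sets] by blast

lemma
  assumes "s \<in> I"
  shows expected_steps_le: "expected_steps s \<le> H"
    and ennreal_expected_steps: "(\<integral>\<^sup>+\<rho>. step_AB A B \<rho> \<partial>L s) = ennreal (expected_steps s)"
  using nn_integral_step_AB_le[OF assms] enn2real_mono[OF nn_integral_step_AB_le[OF assms]] H_nonneg
  by (auto simp: expected_steps_def ennreal_enn2real_if top_unique)

lemma integrable_expected_steps:
  assumes "s \<in> I"
  shows "integrable (K s) expected_steps"
proof (rule integrable_K_bounded[OF I_into_space[OF assms]])
  show "AE s' in K s. \<bar>expected_steps s'\<bar> \<le> H"
    using I_closed[OF assms] by eventually_elim (simp add: expected_steps_nonneg expected_steps_le)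
qed measurable

lemma expected_steps_unfold:
  assumes s: "s \<in> I"
  shows "expected_steps s = (if s \<in> B then 0 else indicator A s + (\<integral>s'. expected_steps s' \<partial>K s))"
proof -
  interpret K: prob_space "K s"
    using I_into_space[OF s] by (rule prob_space_K)
  have "(\<integral>\<^sup>+\<rho>. step_AB A B \<rho> \<partial>L s) = (\<integral>\<^sup>+s'. \<integral>\<^sup>+\<rho>. step_AB A B (s ## \<rho>) \<partial>L s' \<partial>K s)"
    using I_into_space[OF s] by (rule nn_integral_L_unfold) measurable
  also have "\<dots> = (if s \<in> B then 0 else (\<integral>\<^sup>+s'. indicator A s + ennreal (expected_steps s') \<partial>K s))"
  proof -
    have "(\<integral>\<^sup>+\<rho>. indicator A s + step_AB A B \<rho> \<partial>L s') = indicator A s + ennreal (expected_steps s')"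
      if "s' \<in> I" for s'
      using I_into_space[OF that] prob_space_L[OF I_into_space[OF that]]
      by (simp add: nn_integral_add measurable_L_iff ennreal_expected_steps[OF that] prob_space.emeasure_space_1)
    then show ?thesis
      using I_closed[OF s] by (auto simp: step_AB_Cons intro!: nn_integral_cong_AE elim!: AE_mp AE_I2)
  qed
  also have "\<dots> = (if s \<in> B then 0 else ennreal (indicator A s + (\<integral>s'. expected_steps s' \<partial>K s)))"
    using integrable_expected_steps[OF s]
    by (simp add: nn_integral_add nn_integral_eq_integral expected_steps_nonneg K.emeasure_space_1
      measurable_K_iff[OF I_into_space[OF s]] ennreal_plus split: split_indicator)
  moreover have "0 \<le> (\<integral>s'. expected_steps s' \<partial>K s)"
    by (simp add: expected_steps_nonneg)
  ultimately show ?thesis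
    by (auto simp: ennreal_expected_steps[OF s] expected_steps_nonneg simp flip: ennreal_plus split: if_splits)
qed

context
  fixes rB rAB :: real
  assumes rAB: "0 \<le> rAB" and rB_large: "\<gamma> * discounted_cost \<gamma> rAB H \<le> rB"
begin

abbreviation (input) partial_value :: "nat \<Rightarrow> 's \<Rightarrow> real" where
  "partial_value n s \<equiv> \<integral>\<rho>. partial_return \<gamma> (A \<union> B) (reach_avoid_reward rB rAB A B) n \<rho> \<partial>L s"

lemma rB_nonneg: "0 \<le> rB"
  using rB_large gamma discounted_cost_bounds(1)[OF gamma rAB H_nonneg]
  by (smt (verit) mult_nonneg_nonneg)

lemma reach_avoid_return_conditions:
  "0 \<le> \<gamma>" "\<gamma> < 1" "0 \<le> rB + rAB"
  "\<And>s. \<bar>reach_avoid_reward rB rAB A B s\<bar> \<le> (rB + rAB) * indicator (A \<union> B) s"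
  "A \<union> B \<in> sets M" "reach_avoid_reward rB rAB A B \<in> borel_measurable M"
  using gamma rAB rB_nonneg abs_reach_avoid_reward_le[OF rB_nonneg rAB] by auto

lemma integral_expected_steps_le:
  assumes "s \<in> I"
  shows "(\<integral>s'. expected_steps s' \<partial>K s) \<le> H"
proof (rule prob_space.integral_le_const[OF prob_space_K[OF I_into_space[OF assms]] integrable_expected_steps[OF assms]])
  show "AE s' in K s. expected_steps s' \<le> H"
    using I_closed[OF assms] by eventually_elim (rule expected_steps_le)
qed

lemma integral_partial_value_ge:
  assumes s: "s \<in> I"
    and partial_value_ge: "\<And>s'. s' \<in> I \<Longrightarrow> - discounted_cost \<gamma> rAB (expected_steps s') \<le> partial_value n s'"
  shows "- discounted_cost \<gamma> rAB (\<integral>s'. expected_steps s' \<partial>K s) \<le> (\<integral>s'. partial_value n s' \<partial>K s)"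
proof -
  let ?c = "discounted_cost \<gamma> rAB"
  interpret K: prob_space "K s"
    using I_into_space[OF s] by (rule prob_space_K)
  have "- ?c (\<integral>s'. expected_steps s' \<partial>K s) \<le> (\<integral>s'. - ?c (expected_steps s') \<partial>K s)"
    using K.expectation_discounted_cost_le[OF gamma rAB integrable_expected_steps[OF s]]
    by (simp add: expected_steps_nonneg)
  also have "\<dots> \<le> (\<integral>s'. partial_value n s' \<partial>K s)"
  proof (rule integral_mono_AE)
    show "integrable (K s) (\<lambda>s'. - ?c (expected_steps s'))"
      using discounted_cost_bounds[OF gamma rAB expected_steps_nonneg]
      by (intro integrable_K_bounded[OF I_into_space[OF s], where C="rAB / (1 - \<gamma>)"] AE_I2) auto
    show "integrable (K s) (partial_value n)"
      using abs_integral_partial_return_le[OF reach_avoid_return_conditions] I_into_space[OF s]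
      by (intro integrable_K_bounded[where C="(rB + rAB) / (1 - \<gamma>)"] AE_I2) (auto simp: space_K)
    show "AE s' in K s. - ?c (expected_steps s') \<le> partial_value n s'"
      using I_closed[OF s] by eventually_elim (rule partial_value_ge)
  qed
  finally show ?thesis .
qed

lemma partial_value_ge:
  "s \<in> I \<Longrightarrow> - discounted_cost \<gamma> rAB (expected_steps s) \<le> partial_value n s"
proof (induction n arbitrary: s)
  case 0
  then show ?case
    using discounted_cost_bounds(1)[OF gamma rAB expected_steps_nonneg] by simp
next
  case (Suc n s)
  let ?c = "discounted_cost \<gamma> rAB"
  define m where "m = (\<integral>s'. expected_steps s' \<partial>K s)"
  define E where "E = (\<integral>s'. partial_value n s' \<partial>K s)"
  have value_Suc: "partial_value (Suc n) s = reach_avoid_reward rB rAB A B s + (if s \<in> A \<union> B then \<gamma> else 1) * E"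
    unfolding E_def by (rule integral_partial_return_Suc[OF reach_avoid_return_conditions I_into_space[OF Suc.prems]])
  have E_ge: "- ?c m \<le> E"
    unfolding m_def E_def by (rule integral_partial_value_ge[OF Suc.prems Suc.IH])
  have "- ?c H \<le> E"
    using E_ge discounted_cost_mono[OF gamma rAB integral_expected_steps_le[OF Suc.prems]]
    unfolding m_def by linarith
  consider "s \<in> B" | "s \<in> A - B" | "s \<notin> A \<union> B"
    by blast
  then show ?case
  proof cases
    case 1
    then have "partial_value (Suc n) s = rB + \<gamma> * E" "expected_steps s = 0"
      using value_Suc expected_steps_unfold[OF Suc.prems] by (simp_all add: reach_avoid_reward_def)
    moreover have "\<gamma> * - ?c H \<le> \<gamma> * E"
      using \<open>- ?c H \<le> E\<close> gamma by (intro mult_left_mono) auto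
    ultimately show ?thesis
      using rB_large by (simp add: discounted_cost_0[OF gamma])
  next
    case 2
    then have "partial_value (Suc n) s = - rAB + \<gamma> * E" "expected_steps s = 1 + m"
      using value_Suc expected_steps_unfold[OF Suc.prems] by (simp_all add: reach_avoid_reward_def m_def)
    moreover have "\<gamma> * - ?c m \<le> \<gamma> * E"
      using E_ge gamma by (intro mult_left_mono) auto
    ultimately show ?thesis
      by (simp add: discounted_cost_1_plus[OF gamma])
  next
    case 3
    then have "partial_value (Suc n) s = E" "expected_steps s = m"
      using value_Suc expected_steps_unfold[OF Suc.prems] by (simp_all add: reach_avoid_reward_def m_def)
    then show ?thesis
      using E_ge by simp
  qed
qed

lemma integral_discounted_return_ge:
  assumes s: "s \<in> I"
  shows "- discounted_cost \<gamma> rAB H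
    \<le> (\<integral>\<rho>. discounted_return \<gamma> (A \<union> B) (reach_avoid_reward rB rAB A B) \<rho> \<partial>L s)"
proof (rule LIMSEQ_le_const[OF integral_partial_return_tendsto[OF reach_avoid_return_conditions I_into_space[OF s]]])
  have "- discounted_cost \<gamma> rAB H \<le> - discounted_cost \<gamma> rAB (expected_steps s)"
    using discounted_cost_mono[OF gamma rAB expected_steps_le[OF s]] by simp
  then show "\<exists>N. \<forall>n\<ge>N. - discounted_cost \<gamma> rAB H \<le> partial_value n s"
    using partial_value_ge[OF s] by (meson order_trans)
qed

end

end

section \<open>The state process of a Markov decision process\<close>

lemma value_fun_reward_eq:
  "value_fun Pr \<gamma> (reward rB rAB A B) A B s =
    (\<integral>\<omega>. discounted_return \<gamma> (A \<union> B) (reach_avoid_reward rB rAB A B) (smap fst \<omega>) \<partial>Pr s)"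
  by (simp add: value_fun_def discounted_return_def reward_def reach_avoid_reward_def)

locale mdp_path_kernel =
  fixes M :: "'s measure" and Ma :: "'a measure" and P :: "'s \<times> 'a \<Rightarrow> 's measure"
    and pol :: "'s \<Rightarrow> 'a measure" and Pr :: "'s \<Rightarrow> ('s \<times> 'a) stream measure"
  assumes P_kernel: "P \<in> M \<Otimes>\<^sub>M Ma \<rightarrow>\<^sub>M prob_algebra M"
    and pol_kernel: "pol \<in> M \<rightarrow>\<^sub>M prob_algebra Ma"
    and path: "is_path_kernel M Ma P pol Pr"
begin

abbreviation state_kernel :: "'s \<Rightarrow> 's measure" where
  "state_kernel s \<equiv> pol s \<bind> (\<lambda>a. P (s, a))"

abbreviation state_law :: "'s \<Rightarrow> 's stream measure" where
  "state_law s \<equiv> distr (Pr s) (stream_space M) (smap fst)"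

lemma Pr_kernel [measurable]: "Pr \<in> M \<rightarrow>\<^sub>M prob_algebra (stream_space (M \<Otimes>\<^sub>M Ma))"
  using path by (simp add: is_path_kernel_def)

lemma Pr_unfold: "s \<in> space M \<Longrightarrow>
    Pr s = pol s \<bind> (\<lambda>a. P (s, a) \<bind> (\<lambda>s'. distr (Pr s') (stream_space (M \<Otimes>\<^sub>M Ma)) ((##) (s, a))))"
  using path by (simp add: is_path_kernel_def)

lemma measurable_Pr_iff: "s \<in> space M \<Longrightarrow> Pr s \<rightarrow>\<^sub>M N = stream_space (M \<Otimes>\<^sub>M Ma) \<rightarrow>\<^sub>M N"
  by (rule subprob_measurableD(3)[OF measurable_prob_algebraD[OF Pr_kernel]])

lemma
  assumes "s \<in> space M"
  shows prob_space_Pr: "prob_space (Pr s)" and sets_Pr: "sets (Pr s) = sets (stream_space (M \<Otimes>\<^sub>M Ma))"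
  using measurable_space[OF Pr_kernel assms] by (simp_all add: space_prob_algebra)

lemma measurable_smap_fst [measurable]: "smap fst \<in> stream_space (M \<Otimes>\<^sub>M Ma) \<rightarrow>\<^sub>M stream_space M"
  by measurable

lemma
  assumes "s \<in> space M"
  shows sets_pol: "sets (pol s) = sets Ma" and prob_space_pol: "prob_space (pol s)"
  using measurable_space[OF pol_kernel assms] by (simp_all add: space_prob_algebra)

lemma P_kernel_at: "s \<in> space M \<Longrightarrow> (\<lambda>a. P (s, a)) \<in> pol s \<rightarrow>\<^sub>M prob_algebra M"
  by (simp add: measurable_cong_sets[OF sets_pol refl]) (rule measurable_compose[OF _ P_kernel], measurable)

lemma distr_smap_fst_Cons:
  assumes "s' \<in> space M" "(s, a) \<in> space (M \<Otimes>\<^sub>M Ma)"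
  shows "distr (distr (Pr s') (stream_space (M \<Otimes>\<^sub>M Ma)) ((##) (s, a))) (stream_space M) (smap fst) =
    distr (state_law s') (stream_space M) ((##) s)"
proof -
  have "(##) (s, a) \<in> stream_space (M \<Otimes>\<^sub>M Ma) \<rightarrow>\<^sub>M stream_space (M \<Otimes>\<^sub>M Ma)"
    "(##) s \<in> stream_space M \<rightarrow>\<^sub>M stream_space M"
    using assms(2) by (measurable, auto simp: space_pair_measure)
  then show ?thesis
    using assms(1) by (simp add: distr_distr comp_def measurable_Pr_iff)
qed

lemma state_law_unfold:
  assumes s: "s \<in> space M"
  defines "G \<equiv> \<lambda>s'. distr (state_law s') (stream_space M) ((##) s)"
  shows "state_law s = state_kernel s \<bind> G"
proof -
  let ?SP = "stream_space (M \<Otimes>\<^sub>M Ma)"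
  have G: "G \<in> M \<rightarrow>\<^sub>M subprob_algebra (stream_space M)"
    unfolding G_def using s by (intro measurable_prob_algebraD) measurable
  have "(\<lambda>a. P (s, a) \<bind> (\<lambda>s'. distr (Pr s') ?SP ((##) (s, a)))) \<in> Ma \<rightarrow>\<^sub>M prob_algebra ?SP"
    using s P_kernel by measurable
  then have "state_law s =
      pol s \<bind> (\<lambda>a. distr (P (s, a) \<bind> (\<lambda>s'. distr (Pr s') ?SP ((##) (s, a)))) (stream_space M) (smap fst))"
    unfolding Pr_unfold[OF s] using prob_space_pol[OF s]
    by (intro distr_bind[OF _ _ measurable_smap_fst])
      (auto simp: measurable_cong_sets[OF sets_pol[OF s] refl] prob_space.not_empty measurable_prob_algebraD)
  also have "\<dots> = pol s \<bind> (\<lambda>a. P (s, a) \<bind> G)"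
  proof (rule bind_cong[OF refl])
    fix a assume "a \<in> space (pol s)"
    then have sa: "(s, a) \<in> space (M \<Otimes>\<^sub>M Ma)"
      using s sets_eq_imp_space_eq[OF sets_pol[OF s]] by (simp add: space_pair_measure)
    then have sets_P: "sets (P (s, a)) = sets M" and "prob_space (P (s, a))"
      using measurable_space[OF P_kernel sa] by (simp_all add: space_prob_algebra)
    have "(\<lambda>s'. distr (Pr s') ?SP ((##) (s, a))) \<in> P (s, a) \<rightarrow>\<^sub>M subprob_algebra ?SP"
      using sa by (simp add: measurable_cong_sets[OF sets_P refl]) (intro measurable_prob_algebraD, measurable)
    then have "distr (P (s, a) \<bind> (\<lambda>s'. distr (Pr s') ?SP ((##) (s, a)))) (stream_space M) (smap fst) =
        P (s, a) \<bind> (\<lambda>s'. distr (distr (Pr s') ?SP ((##) (s, a))) (stream_space M) (smap fst))"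
      using \<open>prob_space (P (s, a))\<close> by (simp add: distr_bind prob_space.not_empty)
    also have "\<dots> = P (s, a) \<bind> G"
      using sa sets_eq_imp_space_eq[OF sets_P] by (intro bind_cong refl) (simp add: G_def distr_smap_fst_Cons)
    finally show "distr (P (s, a) \<bind> (\<lambda>s'. distr (Pr s') ?SP ((##) (s, a)))) (stream_space M) (smap fst) =
        P (s, a) \<bind> G" .
  qed
  also have "\<dots> = state_kernel s \<bind> G"
    using P_kernel_at[OF s] by (intro bind_assoc[symmetric, OF _ G] measurable_prob_algebraD)
  finally show ?thesis .
qed

sublocale states: markov_chain_law M state_kernel state_law
proof
  show "state_kernel \<in> M \<rightarrow>\<^sub>M prob_algebra M"
    by (rule measurable_bind_prob_space2[OF pol_kernel]) (simp add: P_kernel)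
  show "state_law \<in> M \<rightarrow>\<^sub>M prob_algebra (stream_space M)"
    by measurable
qed (rule state_law_unfold)

lemma AE_mem_absorbing:
  assumes "absorbing Pr I" "I \<in> sets M" "s \<in> I"
  shows "AE s' in state_kernel s. s' \<in> I"
proof -
  have s: "s \<in> space M"
    using assms(2,3) sets.sets_into_space by blast
  interpret K: prob_space "state_kernel s"
    using s by (rule states.prob_space_K)
  interpret Pr: prob_space "Pr s"
    using s by (rule prob_space_Pr)
  have "{\<rho> \<in> space (stream_space M). \<rho> !! 1 \<in> I} \<in> sets (stream_space M)"
    using assms(2) by measurable
  then have "emeasure (state_law s) {\<rho> \<in> space (stream_space M). \<rho> !! 1 \<in> I} =
      emeasure (Pr s) {\<omega> \<in> space (Pr s). fst (\<omega> !! 1) \<in> I}"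
    using s measurable_space[OF measurable_smap_fst] sets_eq_imp_space_eq[OF sets_Pr[OF s]]
    by (simp add: emeasure_distr measurable_Pr_iff) (intro arg_cong[where f="emeasure (Pr s)"], auto)
  also have "\<dots> = 1"
    using assms(1,3) by (simp add: absorbing_def Pr.emeasure_eq_measure)
  finally have "emeasure (state_kernel s) I = 1"
    using states.emeasure_L_snth_1[OF s assms(2)] by simp
  then show ?thesis
    using assms(2) s by (simp add: K.AE_in_set_eq_1 K.emeasure_eq_measure states.sets_K)
qed

lemma nn_integral_state_law:
  "s \<in> space M \<Longrightarrow> f \<in> borel_measurable (stream_space M) \<Longrightarrow>
    (\<integral>\<^sup>+\<rho>. f \<rho> \<partial>state_law s) = (\<integral>\<^sup>+\<omega>. f (smap fst \<omega>) \<partial>Pr s)"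
  by (simp add: nn_integral_distr measurable_Pr_iff)

lemma integral_state_law:
  "s \<in> space M \<Longrightarrow> f \<in> borel_measurable (stream_space M) \<Longrightarrow>
    (\<integral>\<rho>. f \<rho> \<partial>state_law s) = (\<integral>\<omega>. f (smap fst \<omega>) \<partial>Pr s)"
  for f :: "'s stream \<Rightarrow> real"
  by (simp add: integral_distr measurable_Pr_iff)

theorem value_fun_ge_discounted_cost:
  assumes I_sets: "I \<in> sets M" and I_absorbing: "absorbing Pr I" and "A \<in> sets M" "B \<in> sets M"
    and gamma: "0 < \<gamma>" "\<gamma> < 1" and "0 \<le> H"
    and steps_le: "\<And>s. s \<in> I \<Longrightarrow> (\<integral>\<^sup>+\<omega>. step_AB A B (smap fst \<omega>) \<partial>Pr s) \<le> ennreal H"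
    and rAB: "0 \<le> rAB" and rB_large: "\<gamma> * discounted_cost \<gamma> rAB H \<le> rB"
    and s: "s \<in> I"
  shows "- discounted_cost \<gamma> rAB H \<le> value_fun Pr \<gamma> (reward rB rAB A B) A B s"
proof -
  interpret reach_avoid_chain M state_kernel state_law I A B \<gamma> H
  proof
    show "AE s' in state_kernel s. s' \<in> I" if "s \<in> I" for s
      using I_absorbing I_sets that by (rule AE_mem_absorbing)
    show "(\<integral>\<^sup>+\<rho>. step_AB A B \<rho> \<partial>state_law s) \<le> ennreal H" if "s \<in> I" for s
      using steps_le[OF that] assms(3,4) I_sets that sets.sets_into_space
      by (subst nn_integral_state_law) auto
  qed (use assms in auto)
  have "- discounted_cost \<gamma> rAB H
      \<le> (\<integral>\<rho>. discounted_return \<gamma> (A \<union> B) (reach_avoid_reward rB rAB A B) \<rho> \<partial>state_law s)"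
    by (rule integral_discounted_return_ge[OF rAB rB_large s])
  also have "\<dots> = value_fun Pr \<gamma> (reward rB rAB A B) A B s"
    unfolding value_fun_reward_eq using I_into_space[OF s]
    by (intro integral_state_law measurable_discounted_return[OF reach_avoid_return_conditions[OF rAB rB_large]])
  finally show ?thesis .
qed

end

theorem lemma6:
  fixes M :: "'s measure" and Ma :: "'a measure"
    and P :: "'s \<times> 'a \<Rightarrow> 's measure" and \<mu> :: "'s measure"
    and pol :: "'s \<Rightarrow> 'a measure"
    and Pr :: "'s \<Rightarrow> ('s \<times> 'a) stream measure"
    and I A B :: "'s set" and \<gamma> Hbar rB rAB :: real
  assumes P_kernel: "P \<in> M \<Otimes>\<^sub>M Ma \<rightarrow>\<^sub>M prob_algebra M"
    and pol_kernel: "pol \<in> M \<rightarrow>\<^sub>M prob_algebra Ma"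
    and init: "prob_space \<mu>" "sets \<mu> = sets M"
    and path: "is_path_kernel M Ma P pol Pr"
    and I_meas: "I \<in> sets M" and I_abs: "absorbing Pr I" and I_init: "emeasure \<mu> I = 1"
    and A_meas: "A \<in> sets M" and B_meas: "B \<in> sets M"
    and gamma: "0 < \<gamma>" "\<gamma> < 1"
    and Hbar_nonneg: "0 \<le> Hbar"
    and Hbar: "\<And>s. s \<in> I \<Longrightarrow> (\<integral>\<^sup>+ \<omega>. step_AB A B (smap fst \<omega>) \<partial>Pr s) \<le> ennreal Hbar"
    and rB: "0 < rB" and rAB: "0 < rAB"
    and ratio: "rB / rAB \<ge> 1 / (1 - \<gamma>) * (1 / \<gamma> powr (Hbar + 1) - 1)"
  shows "\<forall>s\<in>I. value_fun Pr \<gamma> (reward rB rAB A B) A B s \<ge> - rAB * (1 - \<gamma> powr Hbar) / (1 - \<gamma>)"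
proof
  fix s assume "s \<in> I"
  interpret mdp_path_kernel M Ma P pol Pr
    using P_kernel pol_kernel path by unfold_locales
  have "- discounted_cost \<gamma> rAB Hbar \<le> value_fun Pr \<gamma> (reward rB rAB A B) A B s"
    using I_meas I_abs A_meas B_meas gamma Hbar_nonneg Hbar rAB
      discounted_cost_le_of_ratio[OF gamma Hbar_nonneg rAB ratio] \<open>s \<in> I\<close>
    by (intro value_fun_ge_discounted_cost) auto
  then show "value_fun Pr \<gamma> (reward rB rAB A B) A B s \<ge> - rAB * (1 - \<gamma> powr Hbar) / (1 - \<gamma>)"
    by (simp add: discounted_cost_def)
qed

end
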